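(* Let $(\Omega,D)$ be a chromology and let $X:\mathbf{Seg}(\Omega)\to\mathbf{Icm}$ be a $\mathcal{W}^{\mathrm{mon}}$-pedigrad for $(\Omega,D)$. Let $f:Y\Rightarrow X$ be a morphism in the functor category $[\mathbf{Seg}(\Omega),\mathbf{Icm}]$, let $u_1,u_2:R\Rightarrow Y$ be the pullback of $f$ along itself, and let $q:Y\Rightarrow Y_X$ be the coequalizer of $(u_1,u_2)$ in $[\mathbf{Seg}(\Omega),\mathbf{Icm}]$. Then $Y_X$ is a $\mathcal{W}^{\mathrm{mon}}$-pedigrad for $(\Omega,D)$.
   Context: For $n\ge1$, $[n]=\{1,\dots,n\}$ ordered as usual, $[0]=\emptyset$. For a pre-ordered set $(\Omega,\preceq)$, a segment is a pair $(t,c)$ with $t:[n_1]\to[n_0]$ an order-preserving surjection and $c:[n_0]\to\Omega$; its domain is $[n_1]$. A morphism $(t,c)\to(t',c')$ is a pair $(f_1,f_0)$, $f_1:[n_1]\to[n_1']$ an order-preserving injection, $f_0:[n_0]\to[n_0']$ order-preserving, with $t'f_1=f_0t$ and $c'(f_0(i))\preceq c(i)$ for all $i$; this gives the category $\mathbf{Seg}(\Omega)$. $\mathbf{Seg}(\Omega\,|\,n)$ is the subcategory of segments of domain $[n]$ and morphisms with $f_1=\mathrm{id}$. A chromology $(\Omega,D)$ is a pre-ordered set $\Omega$ equipped, for each $n\ge0$, with a set $D[n]$ of cones in $\mathbf{Seg}(\Omega\,|\,n)$ (a cone being a small category $A$, a functor $\theta:A\to\mathbf{Seg}(\Omega\,|\,n)$,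 an object $\tau$ and a natural transformation from the constant functor at $\tau$ to $\theta$). $\mathbf{Icm}$ is the category of idempotent commutative monoids and monoid morphisms. $\mathcal{W}^{\mathrm{mon}}$ is the class of wide spans in $\mathbf{Icm}$, i.e. cones $\{Z\to F_i\}_{i\in[k]}$ indexed by a finite discrete category, whose induced map $Z\to\prod_{i\in[k]}F_i$ is a monomorphism in $\mathbf{Icm}$. A $\mathcal{W}^{\mathrm{mon}}$-pedigrad for $(\Omega,D)$ is a functor $\mathbf{Seg}(\Omega)\to\mathbf{Icm}$ sending, for every $n\ge0$, each cone in $D[n]$ to a cone belonging to $\mathcal{W}^{\mathrm{mon}}$. Pullbacks and coequalizers in $[\mathbf{Seg}(\Omega),\mathbf{Icm}]$ are computed objectwise. *)

theory Defs
  imports "HOL-Algebra.Group" "HOL-Library.FuncSet"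
begin

definition icm :: "'a monoid \<Rightarrow> bool" where
  "icm M \<longleftrightarrow> comm_monoid M \<and> (\<forall>x\<in>carrier M. x \<otimes>\<^bsub>M\<^esub> x = x)"

definition icm_hom :: "'a monoid \<Rightarrow> 'b monoid \<Rightarrow> ('a \<Rightarrow> 'b) \<Rightarrow> bool" where
  "icm_hom M N h \<longleftrightarrow> h \<in> carrier M \<rightarrow> carrier N
     \<and> (\<forall>x\<in>carrier M. \<forall>y\<in>carrier M. h (x \<otimes>\<^bsub>M\<^esub> y) = h x \<otimes>\<^bsub>N\<^esub> h y)
     \<and> h \<one>\<^bsub>M\<^esub> = \<one>\<^bsub>N\<^esub>"

text \<open>Test objects are taken with
  carriers in the element type of the source (this already detects every failure of
  left cancellability, since a non-injective morphism is detected by a two-element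
  submonoid of the source).\<close>
definition icm_mono :: "'a monoid \<Rightarrow> 'b monoid \<Rightarrow> ('a \<Rightarrow> 'b) \<Rightarrow> bool" where
  "icm_mono Z P h \<longleftrightarrow> icm_hom Z P h \<and>
     (\<forall>(W::'a monoid) g k. icm W \<longrightarrow> icm_hom W Z g \<longrightarrow> icm_hom W Z k \<longrightarrow>
        (\<forall>w\<in>carrier W. h (g w) = h (k w)) \<longrightarrow> (\<forall>w\<in>carrier W. g w = k w))"

definition prod_icm :: "'i set \<Rightarrow> ('i \<Rightarrow> 'a monoid) \<Rightarrow> ('i \<Rightarrow> 'a) monoid" where
  "prod_icm I F = \<lparr>carrier = (\<Pi>\<^sub>E i\<in>I. carrier (F i)),
                   mult = (\<lambda>x y. \<lambda>i\<in>I. x i \<otimes>\<^bsub>F i\<^esub> y i),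
                   one = (\<lambda>i\<in>I. \<one>\<^bsub>F i\<^esub>)\<rparr>"

text \<open>A segment (t,c) with t:[n1]->[n0], c:[n0]->Omega. Functions are stored
  extensionally: t is 0 outside [n1], c is undefined outside [n0].\<close>
datatype 'o seg = Seg (seg_n1: nat) (seg_n0: nat) (seg_t: "nat \<Rightarrow> nat") (seg_c: "nat \<Rightarrow> 'o")

definition is_seg :: "'o set \<Rightarrow> 'o seg \<Rightarrow> bool" where
  "is_seg Om s \<longleftrightarrow>
     seg_t s \<in> {1..seg_n1 s} \<rightarrow> {1..seg_n0 s}
   \<and> (\<forall>i j. 1 \<le> i \<and> i \<le> j \<and> j \<le> seg_n1 s \<longrightarrow> seg_t s i \<le> seg_t s j)
   \<and> seg_t s ` {1..seg_n1 s} = {1..seg_n0 s}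
   \<and> seg_c s \<in> {1..seg_n0 s} \<rightarrow> Om
   \<and> (\<forall>i. i \<notin> {1..seg_n1 s} \<longrightarrow> seg_t s i = 0)
   \<and> (\<forall>j. j \<notin> {1..seg_n0 s} \<longrightarrow> seg_c s j = undefined)"

datatype 'o segmor = SegMor (msrc: "'o seg") (mtgt: "'o seg") (mf1: "nat \<Rightarrow> nat") (mf0: "nat \<Rightarrow> nat")

definition is_segmor :: "'o set \<Rightarrow> ('o \<Rightarrow> 'o \<Rightarrow> bool) \<Rightarrow> 'o segmor \<Rightarrow> bool" where
  "is_segmor Om pre m \<longleftrightarrow>
     is_seg Om (msrc m) \<and> is_seg Om (mtgt m)
   \<and> mf1 m \<in> {1..seg_n1 (msrc m)} \<rightarrow> {1..seg_n1 (mtgt m)}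
   \<and> (\<forall>i j. 1 \<le> i \<and> i < j \<and> j \<le> seg_n1 (msrc m) \<longrightarrow> mf1 m i < mf1 m j)
   \<and> mf0 m \<in> {1..seg_n0 (msrc m)} \<rightarrow> {1..seg_n0 (mtgt m)}
   \<and> (\<forall>i j. 1 \<le> i \<and> i \<le> j \<and> j \<le> seg_n0 (msrc m) \<longrightarrow> mf0 m i \<le> mf0 m j)
   \<and> (\<forall>i\<in>{1..seg_n1 (msrc m)}. seg_t (mtgt m) (mf1 m i) = mf0 m (seg_t (msrc m) i))
   \<and> (\<forall>i\<in>{1..seg_n0 (msrc m)}. pre (seg_c (mtgt m) (mf0 m i)) (seg_c (msrc m) i))
   \<and> (\<forall>i. i \<notin> {1..seg_n1 (msrc m)} \<longrightarrow> mf1 m i = 0)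
   \<and> (\<forall>i. i \<notin> {1..seg_n0 (msrc m)} \<longrightarrow> mf0 m i = 0)"

definition seg_id :: "'o seg \<Rightarrow> 'o segmor" where
  "seg_id s = SegMor s s (\<lambda>i. if i \<in> {1..seg_n1 s} then i else 0)
                         (\<lambda>i. if i \<in> {1..seg_n0 s} then i else 0)"

definition seg_comp :: "'o segmor \<Rightarrow> 'o segmor \<Rightarrow> 'o segmor" where
  "seg_comp m' m = SegMor (msrc m) (mtgt m')
     (\<lambda>i. if i \<in> {1..seg_n1 (msrc m)} then mf1 m' (mf1 m i) else 0)
     (\<lambda>i. if i \<in> {1..seg_n0 (msrc m)} then mf0 m' (mf0 m i) else 0)"

definition is_seg_n :: "'o set \<Rightarrow> nat \<Rightarrow> 'o seg \<Rightarrow> bool" where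
  "is_seg_n Om n s \<longleftrightarrow> is_seg Om s \<and> seg_n1 s = n"

definition is_segmor_n :: "'o set \<Rightarrow> ('o \<Rightarrow> 'o \<Rightarrow> bool) \<Rightarrow> nat \<Rightarrow> 'o segmor \<Rightarrow> bool" where
  "is_segmor_n Om pre n m \<longleftrightarrow> is_segmor Om pre m \<and> seg_n1 (msrc m) = n \<and> seg_n1 (mtgt m) = n
     \<and> mf1 m = (\<lambda>i. if i \<in> {1..n} then i else 0)"

definition icm_functor :: "'o set \<Rightarrow> ('o \<Rightarrow> 'o \<Rightarrow> bool) \<Rightarrow> ('o seg \<Rightarrow> 'x monoid)
     \<Rightarrow> ('o segmor \<Rightarrow> 'x \<Rightarrow> 'x) \<Rightarrow> bool" where
  "icm_functor Om pre Fo Fm \<longleftrightarrow>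
     (\<forall>s. is_seg Om s \<longrightarrow> icm (Fo s))
   \<and> (\<forall>m. is_segmor Om pre m \<longrightarrow> icm_hom (Fo (msrc m)) (Fo (mtgt m)) (Fm m))
   \<and> (\<forall>s. is_seg Om s \<longrightarrow> (\<forall>x\<in>carrier (Fo s). Fm (seg_id s) x = x))
   \<and> (\<forall>m m'. is_segmor Om pre m \<longrightarrow> is_segmor Om pre m' \<longrightarrow> mtgt m = msrc m' \<longrightarrow>
        (\<forall>x\<in>carrier (Fo (msrc m)). Fm (seg_comp m' m) x = Fm m' (Fm m x)))"

definition icm_nat_trans :: "'o set \<Rightarrow> ('o \<Rightarrow> 'o \<Rightarrow> bool)
     \<Rightarrow> ('o seg \<Rightarrow> 'y monoid) \<Rightarrow> ('o segmor \<Rightarrow> 'y \<Rightarrow> 'y)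
     \<Rightarrow> ('o seg \<Rightarrow> 'x monoid) \<Rightarrow> ('o segmor \<Rightarrow> 'x \<Rightarrow> 'x)
     \<Rightarrow> ('o seg \<Rightarrow> 'y \<Rightarrow> 'x) \<Rightarrow> bool" where
  "icm_nat_trans Om pre Yo Ym Xo Xm \<alpha> \<longleftrightarrow>
     icm_functor Om pre Yo Ym \<and> icm_functor Om pre Xo Xm
   \<and> (\<forall>s. is_seg Om s \<longrightarrow> icm_hom (Yo s) (Xo s) (\<alpha> s))
   \<and> (\<forall>m. is_segmor Om pre m \<longrightarrow>
        (\<forall>y\<in>carrier (Yo (msrc m)). \<alpha> (mtgt m) (Ym m y) = Xm m (\<alpha> (msrc m) y)))"

text \<open>A cone: a small category A (objects cobj, hom-sets chom, composition ccomp g f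
  = g after f, identities cid), a functor theta = (ctheta_ob, ctheta_mor) from A to
  Seg(Omega|n), an apex tau and legs tau -> theta(a) forming a natural transformation.\<close>
record ('i, 'h, 'o) segcone =
  cobj :: "'i set"
  chom :: "'i \<Rightarrow> 'i \<Rightarrow> 'h set"
  ccomp :: "'h \<Rightarrow> 'h \<Rightarrow> 'h"
  cid :: "'i \<Rightarrow> 'h"
  ctheta_ob :: "'i \<Rightarrow> 'o seg"
  ctheta_mor :: "'h \<Rightarrow> 'o segmor"
  capex :: "'o seg"
  cleg :: "'i \<Rightarrow> 'o segmor"

definition small_cat :: "('i, 'h, 'o) segcone \<Rightarrow> bool" where
  "small_cat C \<longleftrightarrow>
     (\<forall>a\<in>cobj C. cid C a \<in> chom C a a)
   \<and> (\<forall>a\<in>cobj C. \<forall>b\<in>cobj C. \<forall>c\<in>cobj C. \<forall>f\<in>chom C a b. \<forall>g\<in>chom C b c.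
        ccomp C g f \<in> chom C a c)
   \<and> (\<forall>a\<in>cobj C. \<forall>b\<in>cobj C. \<forall>f\<in>chom C a b.
        ccomp C (cid C b) f = f \<and> ccomp C f (cid C a) = f)
   \<and> (\<forall>a\<in>cobj C. \<forall>b\<in>cobj C. \<forall>c\<in>cobj C. \<forall>d\<in>cobj C.
        \<forall>f\<in>chom C a b. \<forall>g\<in>chom C b c. \<forall>h\<in>chom C c d.
        ccomp C h (ccomp C g f) = ccomp C (ccomp C h g) f)"

definition is_seg_cone :: "'o set \<Rightarrow> ('o \<Rightarrow> 'o \<Rightarrow> bool) \<Rightarrow> nat \<Rightarrow> ('i, 'h, 'o) segcone \<Rightarrow> bool" where
  "is_seg_cone Om pre n C \<longleftrightarrow>
     small_cat C
   \<and> (\<forall>a\<in>cobj C. is_seg_n Om n (ctheta_ob C a))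
   \<and> (\<forall>a\<in>cobj C. \<forall>b\<in>cobj C. \<forall>f\<in>chom C a b.
        is_segmor_n Om pre n (ctheta_mor C f)
      \<and> msrc (ctheta_mor C f) = ctheta_ob C a \<and> mtgt (ctheta_mor C f) = ctheta_ob C b)
   \<and> (\<forall>a\<in>cobj C. ctheta_mor C (cid C a) = seg_id (ctheta_ob C a))
   \<and> (\<forall>a\<in>cobj C. \<forall>b\<in>cobj C. \<forall>c\<in>cobj C. \<forall>f\<in>chom C a b. \<forall>g\<in>chom C b c.
        ctheta_mor C (ccomp C g f) = seg_comp (ctheta_mor C g) (ctheta_mor C f))
   \<and> is_seg_n Om n (capex C)
   \<and> (\<forall>a\<in>cobj C. is_segmor_n Om pre n (cleg C a)
        \<and> msrc (cleg C a) = capex C \<and> mtgt (cleg C a) = ctheta_ob C a)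
   \<and> (\<forall>a\<in>cobj C. \<forall>b\<in>cobj C. \<forall>f\<in>chom C a b.
        seg_comp (ctheta_mor C f) (cleg C a) = cleg C b)"

definition chromology :: "'o set \<Rightarrow> ('o \<Rightarrow> 'o \<Rightarrow> bool) \<Rightarrow> (nat \<Rightarrow> ('i, 'h, 'o) segcone set) \<Rightarrow> bool" where
  "chromology Om pre D \<longleftrightarrow>
     (\<forall>x\<in>Om. pre x x)
   \<and> (\<forall>x\<in>Om. \<forall>y\<in>Om. \<forall>z\<in>Om. pre x y \<longrightarrow> pre y z \<longrightarrow> pre x z)
   \<and> (\<forall>n. \<forall>C\<in>D n. is_seg_cone Om pre n C)"

definition in_Wmon :: "('i, 'h, 'o) segcone \<Rightarrow> 'x monoid \<Rightarrow> ('i \<Rightarrow> 'x monoid)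
     \<Rightarrow> ('i \<Rightarrow> 'x \<Rightarrow> 'x) \<Rightarrow> bool" where
  "in_Wmon C Z F l \<longleftrightarrow>
     finite (cobj C)
   \<and> (\<forall>a\<in>cobj C. \<forall>b\<in>cobj C. chom C a b = (if a = b then {cid C a} else {}))
   \<and> icm_mono Z (prod_icm (cobj C) F) (\<lambda>z. \<lambda>a\<in>cobj C. l a z)"

definition pedigrad :: "'o set \<Rightarrow> ('o \<Rightarrow> 'o \<Rightarrow> bool) \<Rightarrow> (nat \<Rightarrow> ('i, 'h, 'o) segcone set)
     \<Rightarrow> ('o seg \<Rightarrow> 'x monoid) \<Rightarrow> ('o segmor \<Rightarrow> 'x \<Rightarrow> 'x) \<Rightarrow> bool" where
  "pedigrad Om pre D Xo Xm \<longleftrightarrow>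
     icm_functor Om pre Xo Xm
   \<and> (\<forall>n. \<forall>C\<in>D n. in_Wmon C (Xo (capex C)) (\<lambda>a. Xo (ctheta_ob C a))
                       (\<lambda>a. Xm (cleg C a)))"

section \<open>Pullback and coequalizer in [Seg(Omega), Icm], computed objectwise\<close>

definition kp_obj :: "('o seg \<Rightarrow> 'y monoid) \<Rightarrow> ('o seg \<Rightarrow> 'y \<Rightarrow> 'x) \<Rightarrow> 'o seg \<Rightarrow> ('y \<times> 'y) monoid" where
  "kp_obj Yo f s = \<lparr>carrier = {(a, b). a \<in> carrier (Yo s) \<and> b \<in> carrier (Yo s) \<and> f s a = f s b},
                    mult = (\<lambda>(a, b) (c, d). (a \<otimes>\<^bsub>Yo s\<^esub> c, b \<otimes>\<^bsub>Yo s\<^esub> d)),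
                    one = (\<one>\<^bsub>Yo s\<^esub>, \<one>\<^bsub>Yo s\<^esub>)\<rparr>"

definition kp_mor :: "('o segmor \<Rightarrow> 'y \<Rightarrow> 'y) \<Rightarrow> 'o segmor \<Rightarrow> 'y \<times> 'y \<Rightarrow> 'y \<times> 'y" where
  "kp_mor Ym m = (\<lambda>(a, b). (Ym m a, Ym m b))"

definition icm_cong :: "'y monoid \<Rightarrow> ('y \<times> 'y) set \<Rightarrow> bool" where
  "icm_cong M \<theta> \<longleftrightarrow> equiv (carrier M) \<theta>
     \<and> (\<forall>a b c d. (a, b) \<in> \<theta> \<longrightarrow> (c, d) \<in> \<theta> \<longrightarrow> (a \<otimes>\<^bsub>M\<^esub> c, b \<otimes>\<^bsub>M\<^esub> d) \<in> \<theta>)"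

definition gen_cong :: "'y monoid \<Rightarrow> ('y \<times> 'y) set \<Rightarrow> ('y \<times> 'y) set" where
  "gen_cong M S = \<Inter> {\<theta>. icm_cong M \<theta> \<and> S \<subseteq> \<theta>}"

definition quot_icm :: "'y monoid \<Rightarrow> ('y \<times> 'y) set \<Rightarrow> 'y set monoid" where
  "quot_icm M \<theta> = \<lparr>carrier = carrier M // \<theta>,
                   mult = (\<lambda>A B. \<theta> `` {a \<otimes>\<^bsub>M\<^esub> b | a b. a \<in> A \<and> b \<in> B}),
                   one = \<theta> `` {\<one>\<^bsub>M\<^esub>}\<rparr>"

definition coeq_cong :: "('o seg \<Rightarrow> 'r monoid) \<Rightarrow> ('o seg \<Rightarrow> 'y monoid)
     \<Rightarrow> ('o seg \<Rightarrow> 'r \<Rightarrow> 'y) \<Rightarrow> ('o seg \<Rightarrow> 'r \<Rightarrow> 'y) \<Rightarrow> 'o seg \<Rightarrow> ('y \<times> 'y) set" where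
  "coeq_cong Ro Yo u1 u2 s = gen_cong (Yo s) {(u1 s r, u2 s r) | r. r \<in> carrier (Ro s)}"

definition coeq_obj :: "('o seg \<Rightarrow> 'r monoid) \<Rightarrow> ('o seg \<Rightarrow> 'y monoid)
     \<Rightarrow> ('o seg \<Rightarrow> 'r \<Rightarrow> 'y) \<Rightarrow> ('o seg \<Rightarrow> 'r \<Rightarrow> 'y) \<Rightarrow> 'o seg \<Rightarrow> 'y set monoid" where
  "coeq_obj Ro Yo u1 u2 s = quot_icm (Yo s) (coeq_cong Ro Yo u1 u2 s)"

definition coeq_mor :: "('o seg \<Rightarrow> 'r monoid) \<Rightarrow> ('o seg \<Rightarrow> 'y monoid)
     \<Rightarrow> ('o seg \<Rightarrow> 'r \<Rightarrow> 'y) \<Rightarrow> ('o seg \<Rightarrow> 'r \<Rightarrow> 'y) \<Rightarrow> ('o segmor \<Rightarrow> 'y \<Rightarrow> 'y)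
     \<Rightarrow> 'o segmor \<Rightarrow> 'y set \<Rightarrow> 'y set" where
  "coeq_mor Ro Yo u1 u2 Ym m A = coeq_cong Ro Yo u1 u2 (mtgt m) `` (Ym m ` A)"

end

theory Submission
  imports Defs
begin

(* Objectwise, the coequalizer of the kernel pair of f is the quotient of Y by the kernel
   congruence of f. If two classes [a], [b] over the apex of a cone of D have the same image
   under every leg, naturality of f shows that f a and f b have the same image under every
   leg of the corresponding cone of X; that cone is monic since X is a pedigrad, so
   f a = f b and [a] = [b]. This uses that monomorphisms of Icm are injective, which is
   seen by testing against a two-element submonoid {1, x} with x <> 1: idempotency makes x |-> y
   a morphism on it. *)

definition ker_rel :: "'a monoid \<Rightarrow> ('a \<Rightarrow> 'b) \<Rightarrow> ('a \<times> 'a) set" where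
  "ker_rel M h = {(a, b). a \<in> carrier M \<and> b \<in> carrier M \<and> h a = h b}"

lemma icm_cong_ker_rel:
  assumes "monoid M" "icm_hom M N h"
  shows "icm_cong M (ker_rel M h)"
  using assms unfolding icm_cong_def equiv_def refl_on_def sym_def trans_def ker_rel_def icm_hom_def
  by (auto intro: monoid.m_closed)

lemma gen_cong_icm_cong:
  assumes "icm_cong M \<theta>"
  shows "gen_cong M \<theta> = \<theta>"
  using assms unfolding gen_cong_def by blast

lemma equiv_Image_eq_class:
  assumes "equiv A r" "b \<in> B" "\<forall>z\<in>B. (b, z) \<in> r"
  shows "r `` B = r `` {b}"
  using assms unfolding equiv_def trans_def sym_def by blast

lemma equiv_Image_image_class:
  assumes "equiv A r" "equiv B s" "a \<in> A"
    and "\<And>x y. (x, y) \<in> r \<Longrightarrow> (g x, g y) \<in> s"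
  shows "s `` (g ` (r `` {a})) = s `` {g a}"
proof (rule equiv_Image_eq_class[OF assms(2)])
  show "g a \<in> g ` (r `` {a})"
    using equiv_class_self[OF assms(1,3)] by blast
  show "\<forall>z\<in>g ` (r `` {a}). (g a, z) \<in> s"
    using assms(4) by blast
qed

lemma quot_icm_mult_class:
  assumes "monoid M" "icm_cong M \<theta>" "a \<in> carrier M" "b \<in> carrier M"
  shows "\<theta> `` {a} \<otimes>\<^bsub>quot_icm M \<theta>\<^esub> \<theta> `` {b} = \<theta> `` {a \<otimes>\<^bsub>M\<^esub> b}"
proof -
  have eq: "equiv (carrier M) \<theta>" using assms(2) unfolding icm_cong_def by blast
  let ?S = "{x \<otimes>\<^bsub>M\<^esub> y | x y. x \<in> \<theta> `` {a} \<and> y \<in> \<theta> `` {b}}"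
  have "a \<otimes>\<^bsub>M\<^esub> b \<in> ?S" using equiv_class_self[OF eq] assms(3,4) by blast
  moreover have "\<forall>z\<in>?S. (a \<otimes>\<^bsub>M\<^esub> b, z) \<in> \<theta>"
    using assms(2) unfolding icm_cong_def by blast
  ultimately have "\<theta> `` ?S = \<theta> `` {a \<otimes>\<^bsub>M\<^esub> b}" by (rule equiv_Image_eq_class[OF eq])
  thus ?thesis unfolding quot_icm_def by simp
qed

lemma icm_quot_icm:
  assumes "icm M" "icm_cong M \<theta>"
  shows "icm (quot_icm M \<theta>)"
proof -
  interpret comm_monoid M using assms(1) unfolding icm_def by blast
  let ?Q = "quot_icm M \<theta>"
  have car: "carrier ?Q = carrier M // \<theta>" and one: "\<one>\<^bsub>?Q\<^esub> = \<theta> `` {\<one>\<^bsub>M\<^esub>}"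
    unfolding quot_icm_def by simp_all
  note mult = quot_icm_mult_class[OF monoid_axioms assms(2)]
  have "comm_monoid ?Q"
  proof (rule comm_monoidI)
    fix x y z assume "x \<in> carrier ?Q" "y \<in> carrier ?Q" "z \<in> carrier ?Q"
    then obtain a b c where abc: "a \<in> carrier M" "b \<in> carrier M" "c \<in> carrier M"
      and xyz: "x = \<theta> `` {a}" "y = \<theta> `` {b}" "z = \<theta> `` {c}"
      unfolding car by (auto elim!: quotientE)
    show "x \<otimes>\<^bsub>?Q\<^esub> y \<in> carrier ?Q"
      using abc xyz by (simp add: mult car quotientI)
    show "x \<otimes>\<^bsub>?Q\<^esub> y \<otimes>\<^bsub>?Q\<^esub> z = x \<otimes>\<^bsub>?Q\<^esub> (y \<otimes>\<^bsub>?Q\<^esub> z)"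
      using abc xyz by (simp add: mult m_assoc)
    show "\<one>\<^bsub>?Q\<^esub> \<otimes>\<^bsub>?Q\<^esub> x = x"
      using abc xyz by (simp add: mult one)
    show "x \<otimes>\<^bsub>?Q\<^esub> y = y \<otimes>\<^bsub>?Q\<^esub> x"
      using abc xyz by (simp add: mult m_comm)
  qed (simp add: car one quotientI)
  moreover have "x \<otimes>\<^bsub>?Q\<^esub> x = x" if "x \<in> carrier ?Q" for x
    using that assms(1) unfolding car icm_def by (auto simp: mult elim!: quotientE)
  ultimately show ?thesis unfolding icm_def by blast
qed

lemma icm_mono_imp_inj_on:
  assumes "icm Z" "icm_mono Z P h"
  shows "inj_on h (carrier Z)"
proof -
  interpret comm_monoid Z using assms(1) unfolding icm_def by blast
  have idem: "z \<otimes>\<^bsub>Z\<^esub> z = z" if "z \<in> carrier Z" for z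
    using assms(1) that unfolding icm_def by blast
  have cancel: "\<forall>w\<in>carrier W. g w = k w"
    if "icm W" "icm_hom W Z g" "icm_hom W Z k" "\<forall>w\<in>carrier W. h (g w) = h (k w)"
    for W :: "'a monoid" and g k
    using assms(2) that unfolding icm_mono_def by simp
  have main: "x = y" if xy: "x \<in> carrier Z" "y \<in> carrier Z" "h x = h y" "x \<noteq> \<one>\<^bsub>Z\<^esub>" for x y
  proof -
    define W where "W = \<lparr>carrier = {\<one>\<^bsub>Z\<^esub>, x}, mult = mult Z, one = \<one>\<^bsub>Z\<^esub>\<rparr>"
    define k where "k = (\<lambda>w. if w = x then y else \<one>\<^bsub>Z\<^esub>)"
    have "comm_monoid W"
    proof (rule comm_monoidI)
      fix a b c assume "a \<in> carrier W" "b \<in> carrier W" "c \<in> carrier W"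
      hence "a \<in> {\<one>\<^bsub>Z\<^esub>, x}" "b \<in> {\<one>\<^bsub>Z\<^esub>, x}" "c \<in> {\<one>\<^bsub>Z\<^esub>, x}"
        unfolding W_def by simp_all
      thus "a \<otimes>\<^bsub>W\<^esub> b \<in> carrier W" "a \<otimes>\<^bsub>W\<^esub> b \<otimes>\<^bsub>W\<^esub> c = a \<otimes>\<^bsub>W\<^esub> (b \<otimes>\<^bsub>W\<^esub> c)"
        "\<one>\<^bsub>W\<^esub> \<otimes>\<^bsub>W\<^esub> a = a" "a \<otimes>\<^bsub>W\<^esub> b = b \<otimes>\<^bsub>W\<^esub> a"
        using xy idem unfolding W_def by auto
    qed (simp add: W_def)
    hence "icm W" using xy idem unfolding icm_def W_def by auto
    moreover have "icm_hom W Z id" and "icm_hom W Z k"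
      using xy idem unfolding icm_hom_def W_def k_def by auto
    moreover have "\<forall>w\<in>carrier W. h (id w) = h (k w)"
      using xy unfolding W_def k_def by auto
    ultimately have "\<forall>w\<in>carrier W. id w = k w" by (rule cancel)
    thus ?thesis unfolding W_def k_def by simp
  qed
  show ?thesis
  proof (rule inj_onI)
    fix x y assume "x \<in> carrier Z" "y \<in> carrier Z" "h x = h y"
    thus "x = y" using main[of x y] main[of y x] by metis
  qed
qed

lemma icm_monoI:
  assumes "icm_hom Z P h" "inj_on h (carrier Z)"
  shows "icm_mono Z P h"
  unfolding icm_mono_def
proof (intro conjI allI impI ballI)
  fix W :: "'a monoid" and g k w
  assume "icm_hom W Z g" "icm_hom W Z k" "\<forall>w\<in>carrier W. h (g w) = h (k w)" "w \<in> carrier W"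
  thus "g w = k w"
    using inj_onD[OF assms(2)] unfolding icm_hom_def by blast
qed (rule assms(1))

lemma icm_hom_prod_icm:
  assumes "\<And>i. i \<in> I \<Longrightarrow> icm_hom Z (F i) (l i)"
  shows "icm_hom Z (prod_icm I F) (\<lambda>z. \<lambda>i\<in>I. l i z)"
  using assms unfolding icm_hom_def prod_icm_def by (auto simp: restrict_def Pi_iff)

lemma icm_hom_quot_icm:
  assumes "monoid M" "monoid N" "icm_hom M N g" "icm_cong M \<theta>" "icm_cong N \<psi>"
    and resp: "\<And>x y. (x, y) \<in> \<theta> \<Longrightarrow> (g x, g y) \<in> \<psi>"
  shows "icm_hom (quot_icm M \<theta>) (quot_icm N \<psi>) (\<lambda>A. \<psi> `` (g ` A))"
proof -
  have eqM: "equiv (carrier M) \<theta>" and eqN: "equiv (carrier N) \<psi>"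
    using assms(4,5) unfolding icm_cong_def by blast+
  have g_in: "g x \<in> carrier N" if "x \<in> carrier M" for x
    using assms(3) that unfolding icm_hom_def by blast
  have image_class: "\<psi> `` (g ` (\<theta> `` {a})) = \<psi> `` {g a}" if "a \<in> carrier M" for a
    using equiv_Image_image_class[OF eqM eqN that resp] .
  note multM = quot_icm_mult_class[OF assms(1,4)] and multN = quot_icm_mult_class[OF assms(2,5)]
  show ?thesis
    unfolding icm_hom_def
  proof (intro conjI ballI funcsetI)
    fix X assume "X \<in> carrier (quot_icm M \<theta>)"
    then obtain a where "a \<in> carrier M" "X = \<theta> `` {a}"
      unfolding quot_icm_def by (auto elim!: quotientE)
    thus "\<psi> `` (g ` X) \<in> carrier (quot_icm N \<psi>)"
      using image_class g_in unfolding quot_icm_def by (simp add: quotientI)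
  next
    fix X Y assume "X \<in> carrier (quot_icm M \<theta>)" "Y \<in> carrier (quot_icm M \<theta>)"
    then obtain a b where "a \<in> carrier M" "b \<in> carrier M" "X = \<theta> `` {a}" "Y = \<theta> `` {b}"
      unfolding quot_icm_def by (auto elim!: quotientE)
    thus "\<psi> `` (g ` (X \<otimes>\<^bsub>quot_icm M \<theta>\<^esub> Y))
        = \<psi> `` (g ` X) \<otimes>\<^bsub>quot_icm N \<psi>\<^esub> \<psi> `` (g ` Y)"
      using assms(3) unfolding icm_hom_def
      by (simp add: multM multN image_class g_in monoid.m_closed[OF assms(1)])
  next
    show "\<psi> `` (g ` \<one>\<^bsub>quot_icm M \<theta>\<^esub>) = \<one>\<^bsub>quot_icm N \<psi>\<^esub>"
      using assms(3) image_class[OF monoid.one_closed[OF assms(1)]]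
      unfolding icm_hom_def quot_icm_def by simp
  qed
qed

lemma icm_functor_quotient:
  assumes F: "icm_functor Om pre Yo Ym"
    and cong: "\<And>s. is_seg Om s \<Longrightarrow> icm_cong (Yo s) (K s)"
    and resp: "\<And>m a b. is_segmor Om pre m \<Longrightarrow> (a, b) \<in> K (msrc m) \<Longrightarrow>
                 (Ym m a, Ym m b) \<in> K (mtgt m)"
  shows "icm_functor Om pre (\<lambda>s. quot_icm (Yo s) (K s)) (\<lambda>m A. K (mtgt m) `` (Ym m ` A))"
proof -
  have icmY: "\<And>s. is_seg Om s \<Longrightarrow> icm (Yo s)"
    and homY: "\<And>m. is_segmor Om pre m \<Longrightarrow> icm_hom (Yo (msrc m)) (Yo (mtgt m)) (Ym m)"
    and idY: "\<And>s x. is_seg Om s \<Longrightarrow> x \<in> carrier (Yo s) \<Longrightarrow> Ym (seg_id s) x = x"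
    and compY: "\<And>m m' x. is_segmor Om pre m \<Longrightarrow> is_segmor Om pre m' \<Longrightarrow> mtgt m = msrc m' \<Longrightarrow>
                  x \<in> carrier (Yo (msrc m)) \<Longrightarrow> Ym (seg_comp m' m) x = Ym m' (Ym m x)"
    using F unfolding icm_functor_def by auto
  have monoidY: "\<And>s. is_seg Om s \<Longrightarrow> monoid (Yo s)"
    using icmY unfolding icm_def comm_monoid_def by blast
  have eqv: "\<And>s. is_seg Om s \<Longrightarrow> equiv (carrier (Yo s)) (K s)"
    using cong unfolding icm_cong_def by blast
  have segs: "is_seg Om (msrc m)" "is_seg Om (mtgt m)" if "is_segmor Om pre m" for m
    using that unfolding is_segmor_def by auto
  have K_carrier: "x \<in> carrier (Yo s)" "y \<in> carrier (Yo s)"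
    if "is_seg Om s" "(x, y) \<in> K s" for s x y
    using eqv[OF that(1)] that(2) unfolding equiv_def refl_on_def by blast+
  have class_of: "\<exists>a\<in>carrier (Yo s). X = K s `` {a}"
    if "is_seg Om s" "X \<in> carrier (quot_icm (Yo s) (K s))" for s X
    using that unfolding quot_icm_def by (auto elim!: quotientE)
  have class_map: "K (mtgt m) `` (Ym m ` (K (msrc m) `` {a})) = K (mtgt m) `` {Ym m a}"
    if m: "is_segmor Om pre m" and a: "a \<in> carrier (Yo (msrc m))" for m a
    using equiv_Image_image_class[OF eqv[OF segs(1)[OF m]] eqv[OF segs(2)[OF m]] a resp[OF m]] .
  show ?thesis
    unfolding icm_functor_def
  proof (intro conjI allI impI ballI)
    fix s assume "is_seg Om s"
    thus "icm (quot_icm (Yo s) (K s))" by (simp add: icmY cong icm_quot_icm)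
  next
    fix m assume m: "is_segmor Om pre m"
    show "icm_hom (quot_icm (Yo (msrc m)) (K (msrc m))) (quot_icm (Yo (mtgt m)) (K (mtgt m)))
            (\<lambda>A. K (mtgt m) `` (Ym m ` A))"
      using segs[OF m] m by (intro icm_hom_quot_icm monoidY cong homY resp)
  next
    fix s X assume s: "is_seg Om s" and "X \<in> carrier (quot_icm (Yo s) (K s))"
    then obtain a where a: "a \<in> carrier (Yo s)" "X = K s `` {a}" using class_of by blast
    have "(Ym (seg_id s) x, Ym (seg_id s) y) \<in> K s" if "(x, y) \<in> K s" for x y
      using that idY[OF s] K_carrier[OF s that] by simp
    thus "K (mtgt (seg_id s)) `` (Ym (seg_id s) ` X) = X"
      using equiv_Image_image_class[OF eqv[OF s] eqv[OF s] a(1)] idY[OF s a(1)] a(2)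
      by (simp add: seg_id_def)
  next
    fix m m' X assume m: "is_segmor Om pre m" and m': "is_segmor Om pre m'"
      and mm': "mtgt m = msrc m'" and "X \<in> carrier (quot_icm (Yo (msrc m)) (K (msrc m)))"
    then obtain a where a: "a \<in> carrier (Yo (msrc m))" "X = K (msrc m) `` {a}"
      using class_of segs by blast
    have "(Ym (seg_comp m' m) x, Ym (seg_comp m' m) y) \<in> K (mtgt m')"
      if "(x, y) \<in> K (msrc m)" for x y
      using that compY[OF m m' mm'] K_carrier[OF segs(1)[OF m] that] resp[OF m] resp[OF m'] mm'
      by simp
    hence "K (mtgt m') `` (Ym (seg_comp m' m) ` X) = K (mtgt m') `` {Ym m' (Ym m a)}"
      using equiv_Image_image_class[OF eqv[OF segs(1)[OF m]] eqv[OF segs(2)[OF m']] a(1)]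
        compY[OF m m' mm' a(1)] a(2) by simp
    moreover have "Ym m a \<in> carrier (Yo (msrc m'))"
      using homY[OF m] a(1) mm' unfolding icm_hom_def by auto
    ultimately show "K (mtgt (seg_comp m' m)) `` (Ym (seg_comp m' m) ` X)
        = K (mtgt m') `` (Ym m' ` (K (mtgt m) `` (Ym m ` X)))"
      using class_map[OF m a(1)] class_map[OF m'] a(2) mm' by (simp add: seg_comp_def)
  qed
qed

lemma coeq_cong_kernel_pair:
  assumes "icm_cong (Yo s) (ker_rel (Yo s) (f s))"
  shows "coeq_cong (kp_obj Yo f) Yo (\<lambda>s. fst) (\<lambda>s. snd) s = ker_rel (Yo s) (f s)"
proof -
  have "{(fst r, snd r) | r. r \<in> carrier (kp_obj Yo f s)} = ker_rel (Yo s) (f s)"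
    unfolding ker_rel_def kp_obj_def by force
  thus ?thesis
    unfolding coeq_cong_def using gen_cong_icm_cong[OF assms] by simp
qed

lemma ker_rel_respects_nat_trans:
  assumes "icm_nat_trans Om pre Yo Ym Xo Xm f" "is_segmor Om pre m"
    and "(a, b) \<in> ker_rel (Yo (msrc m)) (f (msrc m))"
  shows "(Ym m a, Ym m b) \<in> ker_rel (Yo (mtgt m)) (f (mtgt m))"
  using assms unfolding icm_nat_trans_def icm_functor_def icm_hom_def ker_rel_def
  by (auto simp: Pi_iff)

lemma icm_cong_kernel:
  assumes "icm_nat_trans Om pre Yo Ym Xo Xm f" "is_seg Om s"
  shows "icm_cong (Yo s) (ker_rel (Yo s) (f s))"
proof (rule icm_cong_ker_rel)
  show "monoid (Yo s)" "icm_hom (Yo s) (Xo s) (f s)"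
    using assms unfolding icm_nat_trans_def icm_functor_def icm_def comm_monoid_def by auto
qed

(* K need only agree with the kernel on segments: elsewhere Yo s may fail to be a monoid,
   and the generated congruence coeq_cong is then not the kernel. *)
lemma icm_functor_quotient_kernel:
  assumes f: "icm_nat_trans Om pre Yo Ym Xo Xm f"
    and K: "\<And>s. is_seg Om s \<Longrightarrow> K s = ker_rel (Yo s) (f s)"
  shows "icm_functor Om pre (\<lambda>s. quot_icm (Yo s) (K s)) (\<lambda>m A. K (mtgt m) `` (Ym m ` A))"
proof (rule icm_functor_quotient)
  show "icm_functor Om pre Yo Ym" using f unfolding icm_nat_trans_def by blast
next
  fix s assume "is_seg Om s"
  thus "icm_cong (Yo s) (K s)" using icm_cong_kernel[OF f] K by simp
next
  fix m a b assume "is_segmor Om pre m" "(a, b) \<in> K (msrc m)"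
  moreover have "is_seg Om (msrc m)" "is_seg Om (mtgt m)"
    using \<open>is_segmor Om pre m\<close> unfolding is_segmor_def by auto
  ultimately show "(Ym m a, Ym m b) \<in> K (mtgt m)"
    using ker_rel_respects_nat_trans[OF f] K by simp
qed

lemma inj_on_quotient_kernel_legs:
  assumes f: "icm_nat_trans Om pre Yo Ym Xo Xm f"
    and K: "\<And>s. is_seg Om s \<Longrightarrow> K s = ker_rel (Yo s) (f s)"
    and s: "is_seg Om s"
    and l: "\<And>i. i \<in> I \<Longrightarrow> is_segmor Om pre (l i) \<and> msrc (l i) = s"
    and injX: "inj_on (\<lambda>x. \<lambda>i\<in>I. Xm (l i) x) (carrier (Xo s))"
  shows "inj_on (\<lambda>X. \<lambda>i\<in>I. K (mtgt (l i)) `` (Ym (l i) ` X)) (carrier (quot_icm (Yo s) (K s)))"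
proof (rule inj_onI)
  have nat: "\<And>m y. is_segmor Om pre m \<Longrightarrow> y \<in> carrier (Yo (msrc m)) \<Longrightarrow>
               f (mtgt m) (Ym m y) = Xm m (f (msrc m) y)"
    and fhom: "icm_hom (Yo s) (Xo s) (f s)"
    and homY: "\<And>m. is_segmor Om pre m \<Longrightarrow> icm_hom (Yo (msrc m)) (Yo (mtgt m)) (Ym m)"
    using f s unfolding icm_nat_trans_def icm_functor_def by auto
  have eqv: "\<And>t. is_seg Om t \<Longrightarrow> equiv (carrier (Yo t)) (K t)"
    using icm_cong_kernel[OF f] K unfolding icm_cong_def by simp
  have tgt: "is_seg Om (mtgt (l i))" if "i \<in> I" for i
    using l[OF that] unfolding is_segmor_def by auto
  fix X Y assume "X \<in> carrier (quot_icm (Yo s) (K s))" "Y \<in> carrier (quot_icm (Yo s) (K s))"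
    and XY: "(\<lambda>i\<in>I. K (mtgt (l i)) `` (Ym (l i) ` X)) = (\<lambda>i\<in>I. K (mtgt (l i)) `` (Ym (l i) ` Y))"
  then obtain a b where a: "a \<in> carrier (Yo s)" "X = K s `` {a}"
    and b: "b \<in> carrier (Yo s)" "Y = K s `` {b}"
    unfolding quot_icm_def by (auto elim!: quotientE)
  have "Xm (l i) (f s a) = Xm (l i) (f s b)" if i: "i \<in> I" for i
  proof -
    have resp: "\<And>x y. (x, y) \<in> K s \<Longrightarrow> (Ym (l i) x, Ym (l i) y) \<in> K (mtgt (l i))"
      using ker_rel_respects_nat_trans[OF f] l[OF i] K[OF s] K[OF tgt[OF i]] by blast
    have "K (mtgt (l i)) `` {Ym (l i) a} = K (mtgt (l i)) `` {Ym (l i) b}"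
      using fun_cong[OF XY, of i] i a b
        equiv_Image_image_class[OF eqv[OF s] eqv[OF tgt[OF i]] _ resp] by simp
    moreover have "Ym (l i) a \<in> carrier (Yo (mtgt (l i)))" "Ym (l i) b \<in> carrier (Yo (mtgt (l i)))"
      using homY[OF conjunct1[OF l[OF i]]] l[OF i] a b unfolding icm_hom_def by auto
    ultimately have "(Ym (l i) a, Ym (l i) b) \<in> K (mtgt (l i))"
      using eq_equiv_class_iff[OF eqv[OF tgt[OF i]]] by blast
    thus ?thesis
      using K[OF tgt[OF i]] nat l[OF i] a b unfolding ker_rel_def by auto
  qed
  hence "(\<lambda>i\<in>I. Xm (l i) (f s a)) = (\<lambda>i\<in>I. Xm (l i) (f s b))"
    by (rule restrict_ext)
  moreover have "f s a \<in> carrier (Xo s)" "f s b \<in> carrier (Xo s)"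
    using fhom a b unfolding icm_hom_def by auto
  ultimately have "f s a = f s b" by (rule inj_onD[OF injX])
  hence "(a, b) \<in> K s" using K[OF s] a b unfolding ker_rel_def by simp
  thus "X = Y" using a b eq_equiv_class_iff[OF eqv[OF s]] by blast
qed

lemma in_Wmon_quotient_kernel:
  assumes f: "icm_nat_trans Om pre Yo Ym Xo Xm f"
    and K: "\<And>s. is_seg Om s \<Longrightarrow> K s = ker_rel (Yo s) (f s)"
    and C: "is_seg_cone Om pre n C"
    and WX: "in_Wmon C (Xo (capex C)) (\<lambda>a. Xo (ctheta_ob C a)) (\<lambda>a. Xm (cleg C a))"
  defines "Q \<equiv> \<lambda>s. quot_icm (Yo s) (K s)" and "QM \<equiv> \<lambda>m A. K (mtgt m) `` (Ym m ` A)"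
  shows "in_Wmon C (Q (capex C)) (\<lambda>a. Q (ctheta_ob C a)) (\<lambda>a. QM (cleg C a))"
proof -
  have ap: "is_seg Om (capex C)" using C unfolding is_seg_cone_def is_seg_n_def by blast
  have leg: "is_segmor Om pre (cleg C i) \<and> msrc (cleg C i) = capex C
      \<and> mtgt (cleg C i) = ctheta_ob C i" if "i \<in> cobj C" for i
    using C that unfolding is_seg_cone_def is_segmor_n_def by blast
  have "icm (Xo (capex C))" using f ap unfolding icm_nat_trans_def icm_functor_def by simp
  moreover have "icm_mono (Xo (capex C)) (prod_icm (cobj C) (\<lambda>a. Xo (ctheta_ob C a)))
      (\<lambda>x. \<lambda>i\<in>cobj C. Xm (cleg C i) x)"
    using WX unfolding in_Wmon_def by simp
  ultimately have injX: "inj_on (\<lambda>x. \<lambda>i\<in>cobj C. Xm (cleg C i) x) (carrier (Xo (capex C)))"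
    by (rule icm_mono_imp_inj_on)
  have "icm_functor Om pre Q QM"
    unfolding Q_def QM_def by (rule icm_functor_quotient_kernel[OF f K])
  hence "icm_hom (Q (capex C)) (Q (ctheta_ob C i)) (QM (cleg C i))" if "i \<in> cobj C" for i
    using leg[OF that] unfolding icm_functor_def by (metis (no_types))
  hence "icm_hom (Q (capex C)) (prod_icm (cobj C) (\<lambda>i. Q (ctheta_ob C i)))
           (\<lambda>X. \<lambda>i\<in>cobj C. QM (cleg C i) X)"
    by (rule icm_hom_prod_icm)
  moreover have "inj_on (\<lambda>X. \<lambda>i\<in>cobj C. QM (cleg C i) X) (carrier (Q (capex C)))"
    unfolding Q_def QM_def using inj_on_quotient_kernel_legs[OF f K ap _ injX] leg by simp
  ultimately have "icm_mono (Q (capex C)) (prod_icm (cobj C) (\<lambda>i. Q (ctheta_ob C i)))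
           (\<lambda>X. \<lambda>i\<in>cobj C. QM (cleg C i) X)"
    by (rule icm_monoI)
  thus ?thesis using WX unfolding in_Wmon_def by simp
qed

lemma pedigrad_quotient_kernel:
  assumes "chromology Om pre D" "pedigrad Om pre D Xo Xm"
    and f: "icm_nat_trans Om pre Yo Ym Xo Xm f"
    and K: "\<And>s. is_seg Om s \<Longrightarrow> K s = ker_rel (Yo s) (f s)"
  shows "pedigrad Om pre D (\<lambda>s. quot_icm (Yo s) (K s)) (\<lambda>m A. K (mtgt m) `` (Ym m ` A))"
  unfolding pedigrad_def
proof (intro conjI allI ballI)
  show "icm_functor Om pre (\<lambda>s. quot_icm (Yo s) (K s)) (\<lambda>m A. K (mtgt m) `` (Ym m ` A))"
    using f K by (rule icm_functor_quotient_kernel)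
next
  fix n C assume "C \<in> D n"
  hence "is_seg_cone Om pre n C"
    and "in_Wmon C (Xo (capex C)) (\<lambda>a. Xo (ctheta_ob C a)) (\<lambda>a. Xm (cleg C a))"
    using assms(1,2) unfolding chromology_def pedigrad_def by blast+
  thus "in_Wmon C (quot_icm (Yo (capex C)) (K (capex C)))
          (\<lambda>a. quot_icm (Yo (ctheta_ob C a)) (K (ctheta_ob C a)))
          (\<lambda>a A. K (mtgt (cleg C a)) `` (Ym (cleg C a) ` A))"
    using in_Wmon_quotient_kernel[OF f K] by blast
qed

theorem mainTheorem9:
  fixes Om :: "'o set" and pre :: "'o \<Rightarrow> 'o \<Rightarrow> bool"
    and D :: "nat \<Rightarrow> ('i, 'h, 'o) segcone set"
    and Xo :: "'o seg \<Rightarrow> 'x monoid" and Xm :: "'o segmor \<Rightarrow> 'x \<Rightarrow> 'x"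
    and Yo :: "'o seg \<Rightarrow> 'y monoid" and Ym :: "'o segmor \<Rightarrow> 'y \<Rightarrow> 'y"
    and f :: "'o seg \<Rightarrow> 'y \<Rightarrow> 'x"
  assumes "chromology Om pre D"
    and "pedigrad Om pre D Xo Xm"
    and "icm_nat_trans Om pre Yo Ym Xo Xm f"
  shows "pedigrad Om pre D
           (coeq_obj (kp_obj Yo f) Yo (\<lambda>s. fst) (\<lambda>s. snd))
           (coeq_mor (kp_obj Yo f) Yo (\<lambda>s. fst) (\<lambda>s. snd) Ym)"
proof -
  have "coeq_cong (kp_obj Yo f) Yo (\<lambda>s. fst) (\<lambda>s. snd) s = ker_rel (Yo s) (f s)"
    if "is_seg Om s" for s
    using icm_cong_kernel[OF assms(3) that] by (rule coeq_cong_kernel_pair)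
  thus ?thesis
    unfolding coeq_obj_def[abs_def] coeq_mor_def[abs_def]
    by (rule pedigrad_quotient_kernel[OF assms])
qed

end
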